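(* The axiom system $APAL_{int}$ satisfies substitution of equivalents: for all $\varphi,\psi,\chi\in\mathcal{L}_{APAL_{int}}$ and $p\in\mathit{Prop}$, if $\varphi\leftrightarrow\psi$ is a theorem of $APAL_{int}$, then $\chi[p/\varphi]\leftrightarrow\chi[p/\psi]$ is a theorem of $APAL_{int}$, where $\chi[p/\varphi]$ denotes the uniform substitution of $\varphi$ for $p$ in $\chi$.
   Context: Fix a countable set $\mathit{Prop}$ and a finite non-empty set $\mathcal{A}$ of agents. $\mathcal{L}_{APAL_{int}}$: $\varphi ::= p \mid \neg\varphi \mid \varphi\wedge\varphi \mid K_i\varphi \mid \mathrm{int}(\varphi)\mid [\varphi]\varphi\mid\Box\varphi$; $\mathcal{L}_{PAL_{int}}$ its $\Box$-free fragment; $\bot:=p\wedge\neg p$, other connectives are abbreviations. Necessity forms: $\xi(\sharp)::=\sharp\mid\varphi\to\xi(\sharp)\mid K_i\xi(\sharp)\mid\mathrm{int}(\xi(\sharp))\mid[\varphi]\xi(\sharp)$; $\xi(\varphi)$ replaces the unique $\sharp$ by $\varphi$. $APAL_{int}$: axioms: propositional tautologies; $K_i(\varphi\to\psi)\to(K_i\varphi\to K_i\psi)$; $K_i\varphi\to\varphi$; $K_i\varphi\to K_iK_i\varphi$; $\neg K_i\varphi\to K_i\neg K_i\varphi$; $\mathrm{int}(\varphi\to\psi)\to(\mathrm{int}(\varphi)\to\mathrm{int}(\psi))$; $\mathrm{int}(\varphi)\to\varphi$; $\mathrm{int}(\varphi)\to\mathrm{int}(\mathrm{int}(\varphi))$;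 $K_i\varphi\to\mathrm{int}(\varphi)$; (R1) $[\varphi]p\leftrightarrow(\mathrm{int}(\varphi)\to p)$; (R2) $[\varphi]\neg\psi\leftrightarrow(\mathrm{int}(\varphi)\to\neg[\varphi]\psi)$; (R3) $[\varphi](\psi\wedge\chi)\leftrightarrow[\varphi]\psi\wedge[\varphi]\chi$; (R4) $[\varphi]\mathrm{int}(\psi)\leftrightarrow(\mathrm{int}(\varphi)\to\mathrm{int}([\varphi]\psi))$; (R5) $[\varphi]K_i\psi\leftrightarrow(\mathrm{int}(\varphi)\to K_i[\varphi]\psi)$; (R6) $[\varphi][\psi]\chi\leftrightarrow[\neg[\varphi]\neg\mathrm{int}(\psi)]\chi$; (R7) $\Box\varphi\to[\chi]\varphi$ for $\chi\in\mathcal{L}_{PAL_{int}}$. Rules: modus ponens; from $\varphi$ infer $K_i\varphi$; from $\varphi$ infer $\mathrm{int}(\varphi)$; from $\varphi$ infer $[\psi]\varphi$; from $\xi([\psi]\chi)$ for all $\psi\in\mathcal{L}_{PAL_{int}}$ infer $\xi(\Box\chi)$. Theorems: smallest set containing the axioms and closed under the rules. *)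

theory Defs
  imports "HOL-Library.Countable"
begin

text \<open>Formulas of L_APAL_int over propositional variables of type 'p (countable)
and agents of type 'a (finite, nonempty since HOL types are nonempty).\<close>

datatype ('p, 'a) fm =
    Atom 'p
  | Neg "('p, 'a) fm"
  | Conj "('p, 'a) fm" "('p, 'a) fm"
  | K 'a "('p, 'a) fm"
  | Intr "('p, 'a) fm"
  | Ann "('p, 'a) fm" "('p, 'a) fm"
  | Box "('p, 'a) fm"

definition Imp :: "('p, 'a) fm \<Rightarrow> ('p, 'a) fm \<Rightarrow> ('p, 'a) fm" where
  "Imp a b = Neg (Conj a (Neg b))"

definition Iff :: "('p, 'a) fm \<Rightarrow> ('p, 'a) fm \<Rightarrow> ('p, 'a) fm" where
  "Iff a b = Conj (Imp a b) (Imp b a)"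

fun box_free :: "('p, 'a) fm \<Rightarrow> bool" where
  "box_free (Atom p) = True"
| "box_free (Neg a) = box_free a"
| "box_free (Conj a b) = (box_free a \<and> box_free b)"
| "box_free (K i a) = box_free a"
| "box_free (Intr a) = box_free a"
| "box_free (Ann a b) = (box_free a \<and> box_free b)"
| "box_free (Box a) = False"

text \<open>Propositional tautologies: valid under every assignment of truth values
to the maximal non-Boolean subformulas.\<close>
fun peval :: "(('p, 'a) fm \<Rightarrow> bool) \<Rightarrow> ('p, 'a) fm \<Rightarrow> bool" where
  "peval v (Neg a) = (\<not> peval v a)"
| "peval v (Conj a b) = (peval v a \<and> peval v b)"
| "peval v f = v f"

definition tautology :: "('p, 'a) fm \<Rightarrow> bool" where
  "tautology f = (\<forall>v. peval v f)"

datatype ('p, 'a) nform =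
    Hole
  | NImp "('p, 'a) fm" "('p, 'a) nform"
  | NK 'a "('p, 'a) nform"
  | NInt "('p, 'a) nform"
  | NAnn "('p, 'a) fm" "('p, 'a) nform"

fun fill :: "('p, 'a) nform \<Rightarrow> ('p, 'a) fm \<Rightarrow> ('p, 'a) fm" where
  "fill Hole f = f"
| "fill (NImp a x) f = Imp a (fill x f)"
| "fill (NK i x) f = K i (fill x f)"
| "fill (NInt x) f = Intr (fill x f)"
| "fill (NAnn a x) f = Ann a (fill x f)"

inductive apal_thm :: "('p::countable, 'a::finite) fm \<Rightarrow> bool" where
  Taut: "tautology f \<Longrightarrow> apal_thm f"
| KK: "apal_thm (Imp (K i (Imp a b)) (Imp (K i a) (K i b)))"
| KT: "apal_thm (Imp (K i a) a)"
| K4: "apal_thm (Imp (K i a) (K i (K i a)))"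
| K5: "apal_thm (Imp (Neg (K i a)) (K i (Neg (K i a))))"
| IK: "apal_thm (Imp (Intr (Imp a b)) (Imp (Intr a) (Intr b)))"
| IT: "apal_thm (Imp (Intr a) a)"
| I4: "apal_thm (Imp (Intr a) (Intr (Intr a)))"
| KI: "apal_thm (Imp (K i a) (Intr a))"
| R1: "apal_thm (Iff (Ann a (Atom p)) (Imp (Intr a) (Atom p)))"
| R2: "apal_thm (Iff (Ann a (Neg b)) (Imp (Intr a) (Neg (Ann a b))))"
| R3: "apal_thm (Iff (Ann a (Conj b c)) (Conj (Ann a b) (Ann a c)))"
| R4: "apal_thm (Iff (Ann a (Intr b)) (Imp (Intr a) (Intr (Ann a b))))"
| R5: "apal_thm (Iff (Ann a (K i b)) (Imp (Intr a) (K i (Ann a b))))"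
| R6: "apal_thm (Iff (Ann a (Ann b c)) (Ann (Neg (Ann a (Neg (Intr b)))) c))"
| R7: "box_free c \<Longrightarrow> apal_thm (Imp (Box a) (Ann c a))"
| MP: "apal_thm (Imp a b) \<Longrightarrow> apal_thm a \<Longrightarrow> apal_thm b"
| NecK: "apal_thm a \<Longrightarrow> apal_thm (K i a)"
| NecI: "apal_thm a \<Longrightarrow> apal_thm (Intr a)"
| NecAnn: "apal_thm a \<Longrightarrow> apal_thm (Ann b a)"
| Omega: "(\<And>b. box_free b \<Longrightarrow> apal_thm (fill x (Ann b c))) \<Longrightarrow> apal_thm (fill x (Box c))"

fun subst :: "'p \<Rightarrow> ('p, 'a) fm \<Rightarrow> ('p, 'a) fm \<Rightarrow> ('p, 'a) fm" where
  "subst p f (Atom q) = (if q = p then f else Atom q)"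
| "subst p f (Neg a) = Neg (subst p f a)"
| "subst p f (Conj a b) = Conj (subst p f a) (subst p f b)"
| "subst p f (K i a) = K i (subst p f a)"
| "subst p f (Intr a) = Intr (subst p f a)"
| "subst p f (Ann a b) = Ann (subst p f a) (subst p f b)"
| "subst p f (Box a) = Box (subst p f a)"

end

theory Submission
  imports Defs
begin

text \<open>Provable equivalence is a congruence for every connective, and substitution of
equivalents follows by induction on \<open>\<chi>\<close>. The only delicate position is the announcement
\<open>a\<close> of \<open>[a]b\<close>. The reduction axioms R1--R6 express \<open>[a]b\<close> through \<open>int a\<close> and announcements
of \<open>a\<close> into smaller formulas, which gives congruence in \<open>a\<close> for box-free \<open>b\<close> by induction.
For \<open>[a]\<box>d\<close> the infinitary rule reduces the claim to all \<open>[a][e]d\<close> with \<open>e\<close> box-free, and R6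
rewrites \<open>[a][e]d\<close> as an announcement into \<open>d\<close> of a formula built from \<open>[a]\<not>int e\<close>, which
the box-free case handles.\<close>

lemma peval_Imp [simp]: "peval v (Imp a b) = (peval v a \<longrightarrow> peval v b)"
  by (simp add: Imp_def)

lemma peval_Iff [simp]: "peval v (Iff a b) = (peval v a \<longleftrightarrow> peval v b)"
  by (auto simp: Iff_def)

lemma apal_thm_taut_mp: "apal_thm A \<Longrightarrow> tautology (Imp A B) \<Longrightarrow> apal_thm B"
  using MP Taut by blast

lemma apal_thm_ConjI: "apal_thm A \<Longrightarrow> apal_thm B \<Longrightarrow> apal_thm (Conj A B)"
  by (rule MP[OF MP[OF Taut[of "Imp A (Imp B (Conj A B))"]]]) (auto simp: tautology_def)

lemma apal_thm_imp_trans: "apal_thm (Imp a b) \<Longrightarrow> apal_thm (Imp b c) \<Longrightarrow> apal_thm (Imp a c)"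
  by (erule apal_thm_taut_mp[OF apal_thm_ConjI]) (auto simp: tautology_def)

definition apal_equiv :: "('p::countable, 'a::finite) fm \<Rightarrow> ('p, 'a) fm \<Rightarrow> bool"
    (infix "\<simeq>" 50) where
  "a \<simeq> b \<longleftrightarrow> apal_thm (Iff a b)"

lemmas Ann_Atom_equiv = R1[folded apal_equiv_def]
lemmas Ann_Neg_equiv = R2[folded apal_equiv_def]
lemmas Ann_Conj_equiv = R3[folded apal_equiv_def]
lemmas Ann_Intr_equiv = R4[folded apal_equiv_def]
lemmas Ann_K_equiv = R5[folded apal_equiv_def]
lemmas Ann_Ann_equiv = R6[folded apal_equiv_def]

lemma apal_equiv_iff_imps: "a \<simeq> b \<longleftrightarrow> apal_thm (Imp a b) \<and> apal_thm (Imp b a)"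
proof
  assume "a \<simeq> b"
  then show "apal_thm (Imp a b) \<and> apal_thm (Imp b a)"
    unfolding apal_equiv_def by (auto elim!: apal_thm_taut_mp simp: tautology_def)
next
  assume "apal_thm (Imp a b) \<and> apal_thm (Imp b a)"
  then show "a \<simeq> b"
    unfolding apal_equiv_def by (auto intro: apal_thm_taut_mp[OF apal_thm_ConjI] simp: tautology_def)
qed

lemma apal_equiv_refl [simp]: "a \<simeq> a"
  by (simp add: apal_equiv_iff_imps Taut tautology_def)

lemma apal_equiv_sym: "a \<simeq> b \<Longrightarrow> b \<simeq> a"
  by (simp add: apal_equiv_iff_imps)

lemma apal_equiv_trans [trans]: "a \<simeq> b \<Longrightarrow> b \<simeq> c \<Longrightarrow> a \<simeq> c"
  by (meson apal_equiv_iff_imps apal_thm_imp_trans)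

lemma apal_equiv_imp: "a \<simeq> b \<Longrightarrow> apal_thm (Imp a b)"
  by (simp add: apal_equiv_iff_imps)

lemma Neg_cong: "a \<simeq> a' \<Longrightarrow> Neg a \<simeq> Neg a'"
  unfolding apal_equiv_def by (erule apal_thm_taut_mp) (auto simp: tautology_def)

lemma Conj_cong: "a \<simeq> a' \<Longrightarrow> b \<simeq> b' \<Longrightarrow> Conj a b \<simeq> Conj a' b'"
  unfolding apal_equiv_def by (erule apal_thm_taut_mp[OF apal_thm_ConjI]) (auto simp: tautology_def)

lemma Imp_cong: "a \<simeq> a' \<Longrightarrow> b \<simeq> b' \<Longrightarrow> Imp a b \<simeq> Imp a' b'"
  unfolding Imp_def by (intro Neg_cong Conj_cong)

lemma K_mono: "apal_thm (Imp a b) \<Longrightarrow> apal_thm (Imp (K i a) (K i b))"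
  by (rule MP[OF KK NecK])

lemma K_cong: "a \<simeq> b \<Longrightarrow> K i a \<simeq> K i b"
  by (simp add: apal_equiv_iff_imps K_mono)

lemma Intr_mono: "apal_thm (Imp a b) \<Longrightarrow> apal_thm (Imp (Intr a) (Intr b))"
  by (rule MP[OF IK NecI])

lemma Intr_cong: "a \<simeq> b \<Longrightarrow> Intr a \<simeq> Intr b"
  by (simp add: apal_equiv_iff_imps Intr_mono)

lemma Ann_Ann_if_not_Intr:
  assumes "\<And>a. apal_thm (Imp (Neg (Intr a)) (Ann a d))"
  shows "apal_thm (Imp (Neg (Intr a)) (Ann a (Ann b d)))"
proof -
  txt \<open>By R6, \<open>[a][b]d\<close> is \<open>[a']d\<close>; if \<open>int a\<close> fails then \<open>[a]\<not>int b\<close> holds by R2, so \<open>a'\<close> and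
    hence \<open>int a'\<close> fail.\<close>
  let ?a' = "Neg (Ann a (Neg (Intr b)))"
  have "apal_thm (Imp (Neg (Intr ?a')) (Ann ?a' d))" by (rule assms)
  moreover have "apal_thm (Iff (Ann a (Ann b d)) (Ann ?a' d))" by (rule R6)
  moreover have "apal_thm (Imp (Intr ?a') ?a')" by (rule IT)
  moreover have "apal_thm (Iff (Ann a (Neg (Intr b))) (Imp (Intr a) (Neg (Ann a (Intr b)))))"
    by (rule R2)
  ultimately show ?thesis
    by (rule apal_thm_taut_mp[OF apal_thm_ConjI[OF apal_thm_ConjI[OF apal_thm_ConjI]]])
      (auto simp: tautology_def)
qed

lemma Ann_if_not_Intr: "apal_thm (Imp (Neg (Intr a)) (Ann a c))"
proof (induction c arbitrary: a)
  case (Atom p)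
  show ?case by (rule apal_thm_taut_mp[OF R1[of a p]]) (auto simp: tautology_def)
next
  case (Neg d)
  show ?case by (rule apal_thm_taut_mp[OF R2[of a d]]) (auto simp: tautology_def)
next
  case (Conj d e)
  show ?case
    by (rule apal_thm_taut_mp[OF apal_thm_ConjI[OF R3[of a d e] apal_thm_ConjI[OF Conj.IH]]])
      (auto simp: tautology_def)
next
  case (K i d)
  show ?case by (rule apal_thm_taut_mp[OF R5[of a i d]]) (auto simp: tautology_def)
next
  case (Intr d)
  show ?case by (rule apal_thm_taut_mp[OF R4[of a d]]) (auto simp: tautology_def)
next
  case (Ann b d)
  show ?case by (rule Ann_Ann_if_not_Intr[OF Ann.IH(2)])
next
  case (Box d)
  have "apal_thm (fill (NImp (Neg (Intr a)) (NAnn a Hole)) (Box d))"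
    by (rule Omega) (simp add: Ann_Ann_if_not_Intr[OF Box.IH])
  then show ?case by simp
qed

lemma Ann_mono: "apal_thm (Imp b b') \<Longrightarrow> apal_thm (Imp (Ann a b) (Ann a b'))"
proof -
  assume "apal_thm (Imp b b')"
  then have "apal_thm (Ann a (Neg (Conj b (Neg b'))))" by (metis NecAnn Imp_def)
  moreover have "apal_thm (Iff (Ann a (Neg (Conj b (Neg b'))))
      (Imp (Intr a) (Neg (Ann a (Conj b (Neg b'))))))" by (rule R2)
  moreover have "apal_thm (Iff (Ann a (Conj b (Neg b'))) (Conj (Ann a b) (Ann a (Neg b'))))"
    by (rule R3)
  moreover have "apal_thm (Iff (Ann a (Neg b')) (Imp (Intr a) (Neg (Ann a b'))))" by (rule R2)
  txt \<open>R2 yields \<open>[a]\<not>b' \<rightarrow> \<not>[a]b'\<close> only under \<open>int a\<close>; otherwise \<open>[a]b'\<close> holds vacuously.\<close>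
  moreover have "apal_thm (Imp (Neg (Intr a)) (Ann a b'))" by (rule Ann_if_not_Intr)
  ultimately show ?thesis
    by (rule apal_thm_taut_mp[OF apal_thm_ConjI[OF apal_thm_ConjI[OF apal_thm_ConjI[OF apal_thm_ConjI]]]])
      (auto simp: tautology_def)
qed

lemma Ann_body_cong: "b \<simeq> b' \<Longrightarrow> Ann a b \<simeq> Ann a b'"
  by (simp add: apal_equiv_iff_imps Ann_mono)

lemma Box_mono: "apal_thm (Imp d d') \<Longrightarrow> apal_thm (Imp (Box d) (Box d'))"
proof -
  assume "apal_thm (Imp d d')"
  then have "apal_thm (fill (NImp (Box d) Hole) (Box d'))"
    by (intro Omega) (simp add: apal_thm_imp_trans[OF R7 Ann_mono])
  then show ?thesis by simp
qed

lemma Box_cong: "d \<simeq> d' \<Longrightarrow> Box d \<simeq> Box d'"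
  by (simp add: apal_equiv_iff_imps Box_mono)

lemma Ann_announcement_cong_Atom:
  assumes "a \<simeq> a'"
  shows "Ann a (Atom p) \<simeq> Ann a' (Atom p)"
proof -
  have "Ann a (Atom p) \<simeq> Imp (Intr a) (Atom p)" by (rule Ann_Atom_equiv)
  also have "\<dots> \<simeq> Imp (Intr a') (Atom p)" by (intro Imp_cong Intr_cong apal_equiv_refl assms)
  also have "\<dots> \<simeq> Ann a' (Atom p)" by (rule apal_equiv_sym[OF Ann_Atom_equiv])
  finally show ?thesis .
qed

lemma Ann_announcement_cong_Neg:
  assumes "a \<simeq> a'" and "Ann a d \<simeq> Ann a' d"
  shows "Ann a (Neg d) \<simeq> Ann a' (Neg d)"
proof -
  have "Ann a (Neg d) \<simeq> Imp (Intr a) (Neg (Ann a d))" by (rule Ann_Neg_equiv)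
  also have "\<dots> \<simeq> Imp (Intr a') (Neg (Ann a' d))" by (intro Imp_cong Intr_cong Neg_cong assms)
  also have "\<dots> \<simeq> Ann a' (Neg d)" by (rule apal_equiv_sym[OF Ann_Neg_equiv])
  finally show ?thesis .
qed

lemma Ann_announcement_cong_Conj:
  assumes "Ann a d \<simeq> Ann a' d" and "Ann a e \<simeq> Ann a' e"
  shows "Ann a (Conj d e) \<simeq> Ann a' (Conj d e)"
proof -
  have "Ann a (Conj d e) \<simeq> Conj (Ann a d) (Ann a e)" by (rule Ann_Conj_equiv)
  also have "\<dots> \<simeq> Conj (Ann a' d) (Ann a' e)" by (intro Conj_cong assms)
  also have "\<dots> \<simeq> Ann a' (Conj d e)" by (rule apal_equiv_sym[OF Ann_Conj_equiv])
  finally show ?thesis .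
qed

lemma Ann_announcement_cong_K:
  assumes "a \<simeq> a'" and "Ann a d \<simeq> Ann a' d"
  shows "Ann a (K i d) \<simeq> Ann a' (K i d)"
proof -
  have "Ann a (K i d) \<simeq> Imp (Intr a) (K i (Ann a d))" by (rule Ann_K_equiv)
  also have "\<dots> \<simeq> Imp (Intr a') (K i (Ann a' d))" by (intro Imp_cong Intr_cong K_cong assms)
  also have "\<dots> \<simeq> Ann a' (K i d)" by (rule apal_equiv_sym[OF Ann_K_equiv])
  finally show ?thesis .
qed

lemma Ann_announcement_cong_Intr:
  assumes "a \<simeq> a'" and "Ann a d \<simeq> Ann a' d"
  shows "Ann a (Intr d) \<simeq> Ann a' (Intr d)"
proof -
  have "Ann a (Intr d) \<simeq> Imp (Intr a) (Intr (Ann a d))" by (rule Ann_Intr_equiv)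
  also have "\<dots> \<simeq> Imp (Intr a') (Intr (Ann a' d))" by (intro Imp_cong Intr_cong assms)
  also have "\<dots> \<simeq> Ann a' (Intr d)" by (rule apal_equiv_sym[OF Ann_Intr_equiv])
  finally show ?thesis .
qed

lemma Ann_announcement_cong_Ann:
  assumes "a \<simeq> a'" and "Ann a c \<simeq> Ann a' c"
    and IH_d: "\<And>b b'. b \<simeq> b' \<Longrightarrow> Ann b d \<simeq> Ann b' d"
  shows "Ann a (Ann c d) \<simeq> Ann a' (Ann c d)"
proof -
  have "Ann a (Ann c d) \<simeq> Ann (Neg (Ann a (Neg (Intr c)))) d" by (rule Ann_Ann_equiv)
  also have "\<dots> \<simeq> Ann (Neg (Ann a' (Neg (Intr c)))) d"
    by (intro IH_d Neg_cong Ann_announcement_cong_Neg Ann_announcement_cong_Intr assms)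
  also have "\<dots> \<simeq> Ann a' (Ann c d)" by (rule apal_equiv_sym[OF Ann_Ann_equiv])
  finally show ?thesis .
qed

lemma Ann_announcement_cong_box_free: "box_free b \<Longrightarrow> a \<simeq> a' \<Longrightarrow> Ann a b \<simeq> Ann a' b"
proof (induction b arbitrary: a a')
  case (Ann c d)
  then show ?case by (intro Ann_announcement_cong_Ann) simp_all
qed (simp_all add: Ann_announcement_cong_Atom Ann_announcement_cong_Neg Ann_announcement_cong_Conj
    Ann_announcement_cong_K Ann_announcement_cong_Intr)

lemma Ann_announcement_cong_Box:
  assumes IH_d: "\<And>b b'. b \<simeq> b' \<Longrightarrow> Ann b d \<simeq> Ann b' d" and "a \<simeq> a'"
  shows "Ann a (Box d) \<simeq> Ann a' (Box d)"
proof -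
  have "apal_thm (Imp (Ann b (Box d)) (Ann b' (Box d)))" if "b \<simeq> b'" for b b'
  proof -
    have "apal_thm (Imp (Ann b (Box d)) (Ann b' (Ann e d)))" if "box_free e" for e
    proof (rule apal_thm_imp_trans)
      show "apal_thm (Imp (Ann b (Box d)) (Ann b (Ann e d)))"
        by (rule Ann_mono[OF R7[OF \<open>box_free e\<close>]])
      show "apal_thm (Imp (Ann b (Ann e d)) (Ann b' (Ann e d)))"
        using \<open>box_free e\<close> \<open>b \<simeq> b'\<close>
        by (intro apal_equiv_imp Ann_announcement_cong_Ann Ann_announcement_cong_box_free IH_d)
    qed
    then have "apal_thm (fill (NImp (Ann b (Box d)) (NAnn b' Hole)) (Box d))"
      by (intro Omega) simp
    then show ?thesis by simp
  qed
  then show ?thesis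
    using \<open>a \<simeq> a'\<close> apal_equiv_sym by (blast intro: apal_equiv_iff_imps[THEN iffD2])
qed

lemma Ann_announcement_cong: "a \<simeq> a' \<Longrightarrow> Ann a b \<simeq> Ann a' b"
proof (induction b arbitrary: a a')
  case (Ann c d)
  then show ?case by (intro Ann_announcement_cong_Ann) simp_all
next
  case (Box d)
  then show ?case by (intro Ann_announcement_cong_Box) simp_all
qed (simp_all add: Ann_announcement_cong_Atom Ann_announcement_cong_Neg Ann_announcement_cong_Conj
    Ann_announcement_cong_K Ann_announcement_cong_Intr)

lemma Ann_cong: "a \<simeq> a' \<Longrightarrow> b \<simeq> b' \<Longrightarrow> Ann a b \<simeq> Ann a' b'"
  by (metis Ann_announcement_cong Ann_body_cong apal_equiv_trans)

theorem mainTheorem12: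
  fixes \<phi> \<psi> \<chi> :: "('p::countable, 'a::finite) fm" and p :: 'p
  assumes "apal_thm (Iff \<phi> \<psi>)"
  shows "apal_thm (Iff (subst p \<phi> \<chi>) (subst p \<psi> \<chi>))"
proof -
  have "\<phi> \<simeq> \<psi>" using assms by (simp add: apal_equiv_def)
  then have "subst p \<phi> \<chi> \<simeq> subst p \<psi> \<chi>"
    by (induction \<chi>) (simp_all add: Neg_cong Conj_cong K_cong Intr_cong Ann_cong Box_cong)
  then show ?thesis by (simp add: apal_equiv_def)
qed

end
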